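(* Let $F$ be a forest and let $U$ be a unicyclic graph vertex-disjoint from $F$. (i) Every nontrivial 2-switch over $F$ is a p-switch over $F$. (ii) Let $\tau=\tau_A$, $A=\binom{a\ b}{c\ d}$, be a 2-switch over $G=F\,\dot\cup\, U$ (the disjoint union). If $ab\in E(F)$ and $cd\in E(\operatorname{Forest}(U))$, then $\tau$ is a p-switch over $G$.
   Context: Graphs are finite, simple, undirected, labeled. A unicyclic graph is a connected graph with exactly one cycle; a pseudoforest is a graph each of whose components is a tree or a unicyclic graph. For vertices $a,b,c,d$, $A=\binom{a\ b}{c\ d}$ is interchangeable in $G$ if $ab,cd\in E(G)$, $\{a,b\}\cap\{c,d\}=\varnothing$, $ac,bd\notin E(G)$; the 2-switch $\tau_A$ sends $G$ to $G-ab-cd+ac+bd$ if $A$ is interchangeable and to $G$ otherwise (trivial). A nontrivial 2-switch $\tau$ over a pseudoforest $G$ is a p-switch if $\tau(G)$ is a pseudoforest. $\operatorname{Cycles}(H)$ is the subgraph induced by vertices lying on some cycle of $H$; $\operatorname{Forest}(H)=H-E(\operatorname{Cycles}(H))$. *)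

theory Defs
  imports Main
begin

type_synonym 'a graph = "'a set \<times> 'a set set"

definition verts :: "'a graph \<Rightarrow> 'a set" where "verts G = fst G"
definition edges :: "'a graph \<Rightarrow> 'a set set" where "edges G = snd G"

definition wf_graph :: "'a graph \<Rightarrow> bool" where
  "wf_graph G \<longleftrightarrow> finite (verts G) \<and>
     (\<forall>e\<in>edges G. \<exists>x y. x \<noteq> y \<and> e = {x, y} \<and> x \<in> verts G \<and> y \<in> verts G)"

definition adj :: "'a graph \<Rightarrow> 'a \<Rightarrow> 'a \<Rightarrow> bool" where
  "adj G x y \<longleftrightarrow> {x, y} \<in> edges G"

definition reach :: "'a graph \<Rightarrow> 'a \<Rightarrow> 'a \<Rightarrow> bool" where
  "reach G x y \<longleftrightarrow> x \<in> verts G \<and> (adj G)\<^sup>*\<^sup>* x y"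

definition connected_graph :: "'a graph \<Rightarrow> bool" where
  "connected_graph G \<longleftrightarrow> verts G \<noteq> {} \<and> (\<forall>x\<in>verts G. \<forall>y\<in>verts G. reach G x y)"

definition is_cycle :: "'a graph \<Rightarrow> 'a set set \<Rightarrow> bool" where
  "is_cycle G C \<longleftrightarrow> (\<exists>vs. length vs \<ge> 3 \<and> distinct vs \<and> set vs \<subseteq> verts G \<and>
       C = {{vs ! i, vs ! ((i + 1) mod length vs)} | i. i < length vs} \<and> C \<subseteq> edges G)"

definition acyclic_graph :: "'a graph \<Rightarrow> bool" where
  "acyclic_graph G \<longleftrightarrow> \<not> (\<exists>C. is_cycle G C)"

definition is_forest :: "'a graph \<Rightarrow> bool" where
  "is_forest G \<longleftrightarrow> wf_graph G \<and> acyclic_graph G"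

definition is_tree :: "'a graph \<Rightarrow> bool" where
  "is_tree G \<longleftrightarrow> wf_graph G \<and> connected_graph G \<and> acyclic_graph G"

definition unicyclic :: "'a graph \<Rightarrow> bool" where
  "unicyclic G \<longleftrightarrow> wf_graph G \<and> connected_graph G \<and> (\<exists>!C. is_cycle G C)"

definition induced :: "'a graph \<Rightarrow> 'a set \<Rightarrow> 'a graph" where
  "induced G S = (S, {e \<in> edges G. e \<subseteq> S})"

definition component :: "'a graph \<Rightarrow> 'a \<Rightarrow> 'a graph" where
  "component G v = induced G {y. reach G v y}"

definition pseudoforest :: "'a graph \<Rightarrow> bool" where
  "pseudoforest G \<longleftrightarrow> wf_graph G \<and>
     (\<forall>v\<in>verts G. is_tree (component G v) \<or> unicyclic (component G v))"

definition cycle_verts :: "'a graph \<Rightarrow> 'a set" where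
  "cycle_verts G = {v. \<exists>C. is_cycle G C \<and> v \<in> \<Union>C}"

definition Cycles :: "'a graph \<Rightarrow> 'a graph" where
  "Cycles G = induced G (cycle_verts G)"

definition Forest :: "'a graph \<Rightarrow> 'a graph" where
  "Forest G = (verts G, edges G - edges (Cycles G))"

definition gunion :: "'a graph \<Rightarrow> 'a graph \<Rightarrow> 'a graph" where
  "gunion G H = (verts G \<union> verts H, edges G \<union> edges H)"

definition interchangeable :: "'a graph \<Rightarrow> 'a \<Rightarrow> 'a \<Rightarrow> 'a \<Rightarrow> 'a \<Rightarrow> bool" where
  "interchangeable G a b c d \<longleftrightarrow> {a, b} \<in> edges G \<and> {c, d} \<in> edges G \<and>
     {a, b} \<inter> {c, d} = {} \<and> {a, c} \<notin> edges G \<and> {b, d} \<notin> edges G"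

definition two_switch :: "'a graph \<Rightarrow> 'a \<Rightarrow> 'a \<Rightarrow> 'a \<Rightarrow> 'a \<Rightarrow> 'a graph" where
  "two_switch G a b c d =
     (if interchangeable G a b c d
      then (verts G, (edges G - {{a, b}, {c, d}}) \<union> {{a, c}, {b, d}})
      else G)"

definition p_switch :: "'a graph \<Rightarrow> 'a \<Rightarrow> 'a \<Rightarrow> 'a \<Rightarrow> 'a \<Rightarrow> bool" where
  "p_switch G a b c d \<longleftrightarrow> pseudoforest G \<and> interchangeable G a b c d \<and>
     pseudoforest (two_switch G a b c d)"

end

theory Submission
  imports Defs
begin

text \<open>A forest plus one edge e has at most one cycle, because every cycle must close the
unique forest path between the endpoints of e; so it is a pseudoforest.

For a 2-switch on a forest F, delete ab and cd. If both a, c and b, d were still joined, the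
paths a..c and d..b together with the edge cd would show that ab is not a bridge. Hence one of
the new edges ac, bd joins two different trees, and the switched graph is a forest plus one
edge.

For F \<union> U, delete an edge f of the cycle of U. What remains is a forest in which ab and cd
lie in different trees, so the 2-switch turns it into a forest again, and adding f back gives
a pseudoforest.\<close>

section \<open>Walks given by vertex lists\<close>

fun walk_edges :: "'a list \<Rightarrow> 'a set set" where
  "walk_edges (x # y # r) = insert {x, y} (walk_edges (y # r))"
| "walk_edges _ = {}"

definition cycle_edges :: "'a list \<Rightarrow> 'a set set" where
  "cycle_edges vs = insert {last vs, hd vs} (walk_edges vs)"

lemma walk_edges_conv_nth: "walk_edges vs = {{vs ! i, vs ! Suc i} | i. Suc i < length vs}"
proof (induction vs rule: walk_edges.induct)
  case (1 x y r)
  have "{{(x # y # r) ! i, (x # y # r) ! Suc i} | i. Suc i < length (x # y # r)}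
      = insert {x, y} {{(y # r) ! i, (y # r) ! Suc i} | i. Suc i < length (y # r)}"
  proof (intro set_eqI iffI)
    fix e assume "e \<in> {{(x # y # r) ! i, (x # y # r) ! Suc i} | i. Suc i < length (x # y # r)}"
    then obtain i where "e = {(x # y # r) ! i, (x # y # r) ! Suc i}" "Suc i < length (x # y # r)"
      by blast
    then show "e \<in> insert {x, y} {{(y # r) ! i, (y # r) ! Suc i} | i. Suc i < length (y # r)}"
      by (cases i) auto
  next
    fix e assume "e \<in> insert {x, y} {{(y # r) ! i, (y # r) ! Suc i} | i. Suc i < length (y # r)}"
    then show "e \<in> {{(x # y # r) ! i, (x # y # r) ! Suc i} | i. Suc i < length (x # y # r)}"
    proof
      assume "e = {x, y}"
      then show ?thesis by force
    next
      assume "e \<in> {{(y # r) ! i, (y # r) ! Suc i} | i. Suc i < length (y # r)}"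
      then obtain i where "e = {(y # r) ! i, (y # r) ! Suc i}" "Suc i < length (y # r)" by blast
      then show ?thesis by (intro CollectI exI[of _ "Suc i"]) auto
    qed
  qed
  then show ?case using 1 by simp
qed auto

lemma cycle_edges_conv_nth:
  assumes "vs \<noteq> []"
  shows "cycle_edges vs = {{vs ! i, vs ! ((i + 1) mod length vs)} | i. i < length vs}"
proof (intro set_eqI iffI)
  fix e assume "e \<in> cycle_edges vs"
  then consider "e = {last vs, hd vs}" | "e \<in> walk_edges vs"
    unfolding cycle_edges_def by blast
  then show "e \<in> {{vs ! i, vs ! ((i + 1) mod length vs)} | i. i < length vs}"
  proof cases
    case 1
    then show ?thesis using assms
      by (intro CollectI exI[of _ "length vs - 1"]) (auto simp: last_conv_nth hd_conv_nth)
  next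
    case 2
    then obtain i where "e = {vs ! i, vs ! Suc i}" "Suc i < length vs"
      by (auto simp: walk_edges_conv_nth)
    then show ?thesis by (intro CollectI exI[of _ i]) auto
  qed
next
  fix e assume "e \<in> {{vs ! i, vs ! ((i + 1) mod length vs)} | i. i < length vs}"
  then obtain i where i: "e = {vs ! i, vs ! ((i + 1) mod length vs)}" "i < length vs" by blast
  show "e \<in> cycle_edges vs"
  proof (cases "Suc i < length vs")
    case True
    then show ?thesis using i by (auto simp: cycle_edges_def walk_edges_conv_nth)
  next
    case False
    then have "Suc i = length vs" using i by auto
    then have "i = length vs - 1" "(i + 1) mod length vs = 0" by auto
    then show ?thesis using i assms by (auto simp: cycle_edges_def last_conv_nth hd_conv_nth)
  qed
qed

lemma is_cycle_iff_cycle_edges: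
  "is_cycle G C \<longleftrightarrow> (\<exists>vs. length vs \<ge> 3 \<and> distinct vs \<and> set vs \<subseteq> verts G \<and>
     C = cycle_edges vs \<and> C \<subseteq> edges G)"
  unfolding is_cycle_def
proof (intro ex_cong1 conj_cong refl)
  fix vs :: "'a list"
  assume "length vs \<ge> 3"
  then have "vs \<noteq> []" by auto
  then show "(C = {{vs ! i, vs ! ((i + 1) mod length vs)} | i. i < length vs}) = (C = cycle_edges vs)"
    by (simp add: cycle_edges_conv_nth)
qed

lemma walk_edges_Cons: "r \<noteq> [] \<Longrightarrow> walk_edges (x # r) = insert {x, hd r} (walk_edges r)"
  by (cases r) auto

lemma walk_edges_snoc: "r \<noteq> [] \<Longrightarrow> walk_edges (r @ [x]) = insert {last r, x} (walk_edges r)"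
  by (induction r rule: walk_edges.induct) auto

lemma walk_edges_append_subset: "walk_edges ys \<subseteq> walk_edges (xs @ ys)"
proof (induction xs)
  case (Cons a xs)
  then show ?case by (cases "xs @ ys") (auto simp: walk_edges_Cons)
qed auto

lemma walk_edges_rev: "walk_edges (rev vs) = walk_edges vs"
proof (induction vs)
  case (Cons x r)
  then show ?case
    by (cases "r = []") (simp_all add: walk_edges_snoc walk_edges_Cons last_rev insert_commute)
qed simp

lemma cycle_edges_rev: "cycle_edges (rev vs) = cycle_edges vs"
  by (cases "vs = []") (auto simp: cycle_edges_def walk_edges_rev last_rev hd_rev)

lemma cycle_edges_rotate1: "cycle_edges (rotate1 vs) = cycle_edges vs"
proof (cases vs)
  case (Cons x r)
  then show ?thesis
    by (cases "r = []") (auto simp: cycle_edges_def walk_edges_snoc walk_edges_Cons)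
qed simp

lemma cycle_edges_rotate: "cycle_edges (rotate k vs) = cycle_edges vs"
  by (induction k) (auto simp: cycle_edges_rotate1)

lemma in_walk_edges_split: "e \<in> walk_edges vs \<Longrightarrow> \<exists>p u w q. vs = p @ u # w # q \<and> e = {u, w}"
proof (induction vs rule: walk_edges.induct)
  case (1 x y r)
  show ?case
  proof (cases "e = {x, y}")
    case True
    then show ?thesis by (intro exI[of _ "[]"]) auto
  next
    case False
    then obtain p u w q where "y # r = p @ u # w # q" "e = {u, w}" using 1 by auto
    then show ?thesis by (intro exI[of _ "x # p"]) auto
  qed
qed auto

lemma walk_edges_subset_set: "e \<in> walk_edges vs \<Longrightarrow> e \<subseteq> set vs"
  by (induction vs rule: walk_edges.induct) auto

lemma Union_cycle_edges_subset: "vs \<noteq> [] \<Longrightarrow> \<Union>(cycle_edges vs) \<subseteq> set vs"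
  using walk_edges_subset_set by (fastforce simp: cycle_edges_def)

lemma set_subset_Union_walk_edges: "length vs \<ge> 2 \<Longrightarrow> set vs \<subseteq> \<Union>(walk_edges vs)"
proof (induction vs rule: walk_edges.induct)
  case (1 x y r)
  then show ?case by (cases r) auto
qed auto

lemma closing_edge_notin_walk_edges:
  assumes "distinct ws" "length ws \<ge> 3"
  shows "{last ws, hd ws} \<notin> walk_edges ws"
proof
  assume "{last ws, hd ws} \<in> walk_edges ws"
  then obtain p u w q where ws: "ws = p @ u # w # q" and e: "{last ws, hd ws} = {u, w}"
    using in_walk_edges_split by metis
  have "last ws = last (w # q)" using ws by simp
  then have "u \<noteq> last ws"
    using assms(1) ws by (metis distinct.simps(2) distinct_append last_in_set list.distinct(1))
  then have u: "u = hd ws" and w: "w = last ws" using e by (auto simp: doubleton_eq_iff)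
  have "p = []"
  proof (rule ccontr)
    assume "p \<noteq> []"
    then have "hd ws \<in> set p" using ws by simp
    moreover have "u \<notin> set p" using assms(1) ws by simp
    ultimately show False using u by simp
  qed
  moreover have "q = []"
  proof (rule ccontr)
    assume "q \<noteq> []"
    then have "last ws \<in> set q" using ws by simp
    moreover have "w \<notin> set q" using assms(1) ws by simp
    ultimately show False using w by simp
  qed
  ultimately show False using ws assms(2) by simp
qed

lemma cycle_edges_rotate_to_closing:
  assumes "e \<in> cycle_edges vs"
  shows "\<exists>ws. set ws = set vs \<and> distinct ws = distinct vs \<and> length ws = length vs \<and>
     cycle_edges ws = cycle_edges vs \<and> e = {last ws, hd ws}"
proof (cases "e = {last vs, hd vs}")
  case False
  then have "e \<in> walk_edges vs" using assms by (auto simp: cycle_edges_def)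
  then obtain p u w q where vs: "vs = (p @ [u]) @ (w # q)" and e: "e = {u, w}"
    using in_walk_edges_split by fastforce
  let ?ws = "rotate (length (p @ [u])) vs"
  have "?ws = (w # q) @ (p @ [u])" using vs rotate_append by metis
  then have "e = {last ?ws, hd ?ws}" using e by (simp add: insert_commute)
  moreover have "set ?ws = set vs" "distinct ?ws = distinct vs" "length ?ws = length vs"
    "cycle_edges ?ws = cycle_edges vs"
    by (simp_all only: set_rotate distinct_rotate length_rotate cycle_edges_rotate)
  ultimately show ?thesis by (intro exI[of _ ?ws]) simp
qed (intro exI[of _ vs], simp)

section \<open>Reachability and forests\<close>

definition gdel :: "'a graph \<Rightarrow> 'a set \<Rightarrow> 'a graph" where
  "gdel G e = (verts G, edges G - {e})"

definition gadd :: "'a graph \<Rightarrow> 'a set \<Rightarrow> 'a graph" where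
  "gadd G e = (verts G, insert e (edges G))"

lemma verts_edges_Pair [simp]: "verts (V, E) = V" "edges (V, E) = E"
  by (simp_all add: verts_def edges_def)

lemma gdel_simps [simp]: "verts (gdel G e) = verts G" "edges (gdel G e) = edges G - {e}"
  by (simp_all add: gdel_def)

lemma gadd_simps [simp]: "verts (gadd G e) = verts G" "edges (gadd G e) = insert e (edges G)"
  by (simp_all add: gadd_def)

lemma symp_adj: "symp (adj G)"
  by (simp add: symp_def adj_def insert_commute)

lemma rtranclp_adj_sym: "(adj G)\<^sup>*\<^sup>* x y \<Longrightarrow> (adj G)\<^sup>*\<^sup>* y x"
  using sympD[OF symp_rtranclp[OF symp_adj]] .

lemma rtranclp_adj_mono: "edges G \<subseteq> edges H \<Longrightarrow> (adj G)\<^sup>*\<^sup>* x y \<Longrightarrow> (adj H)\<^sup>*\<^sup>* x y"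
  by (rule rtranclp_mono[THEN predicate2D]) (auto simp: adj_def)

lemma wf_graph_edge_subset: "wf_graph G \<Longrightarrow> e \<in> edges G \<Longrightarrow> e \<subseteq> verts G"
  by (auto simp: wf_graph_def)

lemma wf_graph_edge_neq: "wf_graph G \<Longrightarrow> {a, b} \<in> edges G \<Longrightarrow> a \<noteq> b"
  unfolding wf_graph_def by (metis doubleton_eq_iff)

lemma wf_graph_subgraph: "wf_graph G \<Longrightarrow> verts H = verts G \<Longrightarrow> edges H \<subseteq> edges G \<Longrightarrow> wf_graph H"
  unfolding wf_graph_def by (metis subsetD)

lemma wf_graph_gadd:
  "wf_graph G \<Longrightarrow> x \<noteq> y \<Longrightarrow> x \<in> verts G \<Longrightarrow> y \<in> verts G \<Longrightarrow> wf_graph (gadd G {x, y})"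
  unfolding wf_graph_def by auto

lemma rtranclp_adj_in_verts:
  assumes "wf_graph G" "v \<in> verts G"
  shows "(adj G)\<^sup>*\<^sup>* v y \<Longrightarrow> y \<in> verts G"
proof (induction rule: rtranclp_induct)
  case (step y z)
  then show ?case using wf_graph_edge_subset[OF assms(1), of "{y, z}"] by (auto simp: adj_def)
qed (use assms in simp)

lemma rtranclp_adj_if_walk:
  "walk_edges p \<subseteq> edges G \<Longrightarrow> p \<noteq> [] \<Longrightarrow> (adj G)\<^sup>*\<^sup>* (hd p) (last p)"
proof (induction p rule: walk_edges.induct)
  case (1 x y r)
  then have "adj G x y" by (auto simp: adj_def)
  moreover have "(adj G)\<^sup>*\<^sup>* y (last (y # r))" using 1 by auto
  ultimately show ?case by (simp add: converse_rtranclp_into_rtranclp)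
qed auto

lemma distinct_walk_if_rtranclp_adj:
  "(adj G)\<^sup>*\<^sup>* x y \<Longrightarrow>
     \<exists>p. p \<noteq> [] \<and> hd p = x \<and> last p = y \<and> distinct p \<and> walk_edges p \<subseteq> edges G"
proof (induction rule: converse_rtranclp_induct)
  case base
  then show ?case by (intro exI[of _ "[y]"]) auto
next
  case (step x z)
  then obtain q where q: "q \<noteq> []" "hd q = z" "last q = y" "distinct q" "walk_edges q \<subseteq> edges G"
    by blast
  show ?case
  proof (cases "x \<in> set q")
    case True
    then obtain q1 q2 where qs: "q = q1 @ x # q2" by (meson split_list)
    then have "walk_edges (x # q2) \<subseteq> edges G"
      using q(5) walk_edges_append_subset[of "x # q2" q1] by auto
    then show ?thesis using q qs by (intro exI[of _ "x # q2"]) auto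
  next
    case False
    then show ?thesis using q step(1)
      by (intro exI[of _ "x # q"]) (auto simp: walk_edges_Cons adj_def)
  qed
qed

lemma rtranclp_adj_gadd_cases:
  assumes "(adj (gadd G {u, v}))\<^sup>*\<^sup>* x y"
  shows "(adj G)\<^sup>*\<^sup>* x y \<or> ((adj G)\<^sup>*\<^sup>* x u \<and> (adj G)\<^sup>*\<^sup>* v y) \<or>
    ((adj G)\<^sup>*\<^sup>* x v \<and> (adj G)\<^sup>*\<^sup>* u y)"
  using assms
proof (induction rule: rtranclp_induct)
  case (step y z)
  then have "adj G y z \<or> (y = u \<and> z = v) \<or> (y = v \<and> z = u)"
    by (auto simp: adj_def doubleton_eq_iff)
  then show ?case
  proof (elim disjE)
    assume "adj G y z"
    then show ?case using step(3) by (meson rtranclp.rtrancl_into_rtrancl)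
  qed (use step(3) in auto)
qed simp

lemma is_cycle_mono: "is_cycle G C \<Longrightarrow> verts G \<subseteq> verts H \<Longrightarrow> C \<subseteq> edges H \<Longrightarrow> is_cycle H C"
  unfolding is_cycle_iff_cycle_edges by blast

lemma is_cycle_subset_edges: "is_cycle G C \<Longrightarrow> C \<subseteq> edges G"
  unfolding is_cycle_def by blast

lemma acyclic_graph_mono:
  assumes "acyclic_graph H" "verts G \<subseteq> verts H" "edges G \<subseteq> edges H"
  shows "acyclic_graph G"
proof -
  have "is_cycle H C" if "is_cycle G C" for C
    using is_cycle_mono[OF that assms(2)] is_cycle_subset_edges[OF that] assms(3) by blast
  then show ?thesis using assms(1) unfolding acyclic_graph_def by blast
qed

text \<open>A walk from x to y avoiding the edge xy closes up to a cycle.\<close>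

lemma bridge_if_acyclic:
  assumes wf: "wf_graph G" and ac: "acyclic_graph G" and e: "{x, y} \<in> edges G"
  shows "\<not> (adj (gdel G {x, y}))\<^sup>*\<^sup>* x y"
proof
  assume r: "(adj (gdel G {x, y}))\<^sup>*\<^sup>* x y"
  obtain p where p: "p \<noteq> []" "hd p = x" "last p = y" "distinct p"
    "walk_edges p \<subseteq> edges G - {{x, y}}"
    using distinct_walk_if_rtranclp_adj[OF r] by auto
  have xy: "x \<noteq> y" using wf_graph_edge_neq[OF wf e] .
  have "length p \<ge> 2"
  proof (rule ccontr)
    assume "\<not> length p \<ge> 2"
    moreover have "length p \<noteq> 0" using p(1) by simp
    ultimately have "length p = 1" by linarith
    then have "hd p = last p" by (cases p) (auto simp: length_0_conv)
    then show False using p xy by simp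
  qed
  moreover have "length p \<noteq> 2"
  proof
    assume "length p = 2"
    then obtain u w where "p = [u, w]" by (metis One_nat_def Suc_1 length_0_conv length_Suc_conv)
    then show False using p by simp
  qed
  ultimately have "length p \<ge> 3" by simp
  moreover have "set p \<subseteq> verts G"
    using set_subset_Union_walk_edges[OF \<open>length p \<ge> 2\<close>] p(5) wf_graph_edge_subset[OF wf] by blast
  moreover have "cycle_edges p \<subseteq> edges G"
    using p e by (auto simp: cycle_edges_def insert_commute)
  ultimately have "is_cycle G (cycle_edges p)"
    unfolding is_cycle_iff_cycle_edges using p(4) by blast
  then show False using ac unfolding acyclic_graph_def by blast
qed

lemma acyclic_walk_unique:
  assumes wf: "wf_graph G" and ac: "acyclic_graph G"
  shows "walk_edges p \<subseteq> edges G \<Longrightarrow> walk_edges q \<subseteq> edges G \<Longrightarrow> distinct p \<Longrightarrow> distinct q \<Longrightarrow>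
    p \<noteq> [] \<Longrightarrow> q \<noteq> [] \<Longrightarrow> hd p = hd q \<Longrightarrow> last p = last q \<Longrightarrow> p = q"
proof (induction p arbitrary: q)
  case (Cons x p')
  show ?case
  proof (cases p')
    case Nil
    then have "last q = hd q" using Cons.prems by simp
    then show ?thesis using Cons.prems Nil
      by (metis distinct.simps(2) hd_Cons_tl last.simps last_in_set)
  next
    case (Cons u p'')
    obtain w q' where q: "q = x # w # q'"
    proof -
      obtain q0 where q0: "q = x # q0" using Cons.prems by (cases q) auto
      have "q0 \<noteq> []"
      proof
        assume "q0 = []"
        then have "last (x # p') = x" using Cons.prems q0 by simp
        then show False using Cons Cons.prems(3)
          by (metis distinct.simps(2) last_ConsR last_in_set list.distinct(1))
      qed
      then show ?thesis using that q0 by (cases q0) auto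
    qed
    show ?thesis
    proof (cases "u = w")
      case True
      then have "p' = w # q'"
        using Cons.IH[of "w # q'"] Cons.prems q Cons by (auto simp: walk_edges_Cons)
      then show ?thesis using q by simp
    next
      case False
      txt \<open>Otherwise both walks reach last q without using the edge xu, so xu is no bridge.\<close>
      let ?e = "{x, u}"
      have eG: "?e \<in> edges G" using Cons.prems(1) Cons by auto
      have "?e \<notin> walk_edges p'" using Cons.prems(3) walk_edges_subset_set by fastforce
      then have "walk_edges p' \<subseteq> edges (gdel G ?e)" using Cons.prems(1) Cons by (auto simp: walk_edges_Cons)
      then have r1: "(adj (gdel G ?e))\<^sup>*\<^sup>* u (last p')" using rtranclp_adj_if_walk[of p'] Cons by simp
      have "?e \<notin> walk_edges (w # q')" using Cons.prems(4) q walk_edges_subset_set by fastforce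
      moreover have "?e \<noteq> {x, w}" using False by (auto simp: doubleton_eq_iff)
      ultimately have "walk_edges q \<subseteq> edges (gdel G ?e)" using Cons.prems(2) q by auto
      then have r2: "(adj (gdel G ?e))\<^sup>*\<^sup>* x (last q)" using rtranclp_adj_if_walk[of q] q by simp
      have "last q = last p'" using Cons.prems(8) Cons by simp
      then have "(adj (gdel G ?e))\<^sup>*\<^sup>* x u" using r2 rtranclp_adj_sym[OF r1] by (metis rtranclp_trans)
      then show ?thesis using bridge_if_acyclic[OF wf ac eG] by blast
    qed
  qed
qed simp

lemma is_cycle_closing_edge:
  assumes "is_cycle G C" "e \<in> C"
  shows "\<exists>ws. distinct ws \<and> length ws \<ge> 3 \<and> set ws \<subseteq> verts G \<and> C = cycle_edges ws \<and>
     e = {last ws, hd ws} \<and> walk_edges ws \<subseteq> C - {e}"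
proof -
  obtain vs where vs: "length vs \<ge> 3" "distinct vs" "set vs \<subseteq> verts G" "C = cycle_edges vs"
    using assms(1) unfolding is_cycle_iff_cycle_edges by blast
  obtain ws where ws: "set ws = set vs" "distinct ws = distinct vs" "length ws = length vs"
     "cycle_edges ws = cycle_edges vs" "e = {last ws, hd ws}"
    using cycle_edges_rotate_to_closing[of e vs] assms(2) vs(4) by blast
  have "e \<notin> walk_edges ws" using closing_edge_notin_walk_edges[of ws] ws vs by simp
  then have "walk_edges ws \<subseteq> C - {e}" using ws vs by (auto simp: cycle_edges_def)
  then show ?thesis using ws vs by (intro exI[of _ ws]) auto
qed

lemma gadd_edge_in_cycle:
  assumes "acyclic_graph G" "is_cycle (gadd G e) C"
  shows "e \<in> C"
proof (rule ccontr)
  assume "e \<notin> C"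
  then have "C \<subseteq> edges G" using is_cycle_subset_edges[OF assms(2)] by auto
  then have "is_cycle G C" using is_cycle_mono[OF assms(2)] by simp
  then show False using assms(1) unfolding acyclic_graph_def by blast
qed

lemma acyclic_gadd:
  assumes ac: "acyclic_graph G" and nr: "\<not> (adj G)\<^sup>*\<^sup>* x y"
  shows "acyclic_graph (gadd G {x, y})"
  unfolding acyclic_graph_def
proof
  assume "\<exists>C. is_cycle (gadd G {x, y}) C"
  then obtain C where C: "is_cycle (gadd G {x, y}) C" by blast
  obtain ws where ws: "length ws \<ge> 3" "{x, y} = {last ws, hd ws}" "walk_edges ws \<subseteq> C - {{x, y}}"
    using is_cycle_closing_edge[OF C gadd_edge_in_cycle[OF ac C]] by blast
  have "C \<subseteq> insert {x, y} (edges G)" using is_cycle_subset_edges[OF C] by simp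
  then have "walk_edges ws \<subseteq> edges G" using ws(3) by blast
  moreover have "ws \<noteq> []" using ws(1) by auto
  ultimately have r: "(adj G)\<^sup>*\<^sup>* (hd ws) (last ws)" using rtranclp_adj_if_walk by blast
  then show False using nr rtranclp_adj_sym[OF r] ws(2) by (auto simp: doubleton_eq_iff)
qed

lemma cycle_unique_gadd:
  assumes wf: "wf_graph G" and ac: "acyclic_graph G"
    and C1: "is_cycle (gadd G e) C1" and C2: "is_cycle (gadd G e) C2"
  shows "C1 = C2"
proof -
  have closing: "\<exists>ws. distinct ws \<and> length ws \<ge> 3 \<and> C = cycle_edges ws \<and> e = {last ws, hd ws} \<and>
      walk_edges ws \<subseteq> edges G"
    if C: "is_cycle (gadd G e) C" for C
  proof -
    obtain ws where ws: "distinct ws" "length ws \<ge> 3" "C = cycle_edges ws" "e = {last ws, hd ws}"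
      "walk_edges ws \<subseteq> C - {e}"
      using is_cycle_closing_edge[OF C gadd_edge_in_cycle[OF ac C]] by blast
    have "C \<subseteq> insert e (edges G)" using is_cycle_subset_edges[OF C] by simp
    then have "walk_edges ws \<subseteq> edges G" using ws(5) by blast
    then show ?thesis using ws by blast
  qed
  obtain p where p: "distinct p" "length p \<ge> 3" "C1 = cycle_edges p" "e = {last p, hd p}"
    "walk_edges p \<subseteq> edges G"
    using closing[OF C1] by blast
  obtain q where q: "distinct q" "length q \<ge> 3" "C2 = cycle_edges q" "e = {last q, hd q}"
    "walk_edges q \<subseteq> edges G"
    using closing[OF C2] by blast
  have ne: "p \<noteq> []" "q \<noteq> []" using p(2) q(2) by auto
  consider "hd p = hd q \<and> last p = last q" | "hd p = last q \<and> last p = hd q"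
    using doubleton_eq_iff[of "last p" "hd p" "last q" "hd q"] p(4) q(4) by blast
  then show ?thesis
  proof cases
    case 1
    have "p = q" by (rule acyclic_walk_unique[OF wf ac p(5) q(5) p(1) q(1) ne]) (use 1 in auto)
    then show ?thesis using p q by simp
  next
    case 2
    have "walk_edges (rev q) \<subseteq> edges G" using q(5) by (simp add: walk_edges_rev)
    moreover have "hd p = hd (rev q)" "last p = last (rev q)" using 2 ne by (auto simp: hd_rev last_rev)
    ultimately have "p = rev q"
      by (intro acyclic_walk_unique[OF wf ac p(5) _ p(1)]) (use q(1) ne in auto)
    then show ?thesis using p q by (simp add: cycle_edges_rev)
  qed
qed

section \<open>Pseudoforests\<close>

lemma component_simps:
  "verts (component G v) = {y. reach G v y}"
  "edges (component G v) = {e \<in> edges G. e \<subseteq> {y. reach G v y}}"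
  by (simp_all add: component_def induced_def)

lemma wf_graph_component:
  assumes wf: "wf_graph G"
  shows "wf_graph (component G v)"
  unfolding wf_graph_def
proof (intro conjI ballI)
  have "{y. reach G v y} \<subseteq> verts G"
    using rtranclp_adj_in_verts[OF wf] by (auto simp: reach_def)
  then show "finite (verts (component G v))"
    using wf finite_subset unfolding wf_graph_def component_simps by blast
  fix e assume e: "e \<in> edges (component G v)"
  then obtain x y where "x \<noteq> y" "e = {x, y}"
    using wf unfolding wf_graph_def component_simps by blast
  then show "\<exists>x y. x \<noteq> y \<and> e = {x, y} \<and> x \<in> verts (component G v) \<and> y \<in> verts (component G v)"
    using e unfolding component_simps by blast
qed

lemma connected_graph_component:
  assumes v: "v \<in> verts G"
  shows "connected_graph (component G v)"
proof -
  have to_comp: "(adj (component G v))\<^sup>*\<^sup>* v y" if "reach G v y" for y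
  proof -
    have "(adj G)\<^sup>*\<^sup>* v y" using that unfolding reach_def by simp
    then show ?thesis
    proof (induction rule: rtranclp_induct)
      case (step y z)
      then have "reach G v y" "reach G v z" using v unfolding reach_def by auto
      then have "adj (component G v) y z" using step(2) by (auto simp: adj_def component_simps)
      then show ?case using step(3) by (meson rtranclp.rtrancl_into_rtrancl)
    qed simp
  qed
  show ?thesis
    unfolding connected_graph_def
  proof (intro conjI ballI)
    show "verts (component G v) \<noteq> {}" using v by (auto simp: component_simps reach_def)
    fix x y assume x: "x \<in> verts (component G v)" and y: "y \<in> verts (component G v)"
    have "(adj (component G v))\<^sup>*\<^sup>* v x" "(adj (component G v))\<^sup>*\<^sup>* v y"
      using x y to_comp by (auto simp: component_simps)
    then have "(adj (component G v))\<^sup>*\<^sup>* x y" using rtranclp_adj_sym by (metis rtranclp_trans)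
    then show "reach (component G v) x y" unfolding reach_def using x by simp
  qed
qed

lemma is_cycle_of_component:
  assumes wf: "wf_graph G" and C: "is_cycle (component G v) C"
  shows "is_cycle G C"
proof -
  have "verts (component G v) \<subseteq> verts G"
    using rtranclp_adj_in_verts[OF wf] by (auto simp: component_simps reach_def)
  moreover have "C \<subseteq> edges G"
    using is_cycle_subset_edges[OF C] by (auto simp: component_simps)
  ultimately show ?thesis using is_cycle_mono[OF C] by blast
qed

lemma pseudoforest_if_at_most_one_cycle:
  assumes wf: "wf_graph G" and le1: "\<And>C1 C2. is_cycle G C1 \<Longrightarrow> is_cycle G C2 \<Longrightarrow> C1 = C2"
  shows "pseudoforest G"
  unfolding pseudoforest_def
proof (intro conjI ballI wf)
  fix v assume v: "v \<in> verts G"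
  have K: "wf_graph (component G v)" "connected_graph (component G v)"
    using wf_graph_component[OF wf] connected_graph_component[OF v] .
  show "is_tree (component G v) \<or> unicyclic (component G v)"
  proof (cases "\<exists>C. is_cycle (component G v) C")
    case True
    then have "\<exists>!C. is_cycle (component G v) C" using is_cycle_of_component[OF wf] le1 by blast
    then show ?thesis using K unfolding unicyclic_def by blast
  next
    case False
    then show ?thesis using K unfolding is_tree_def acyclic_graph_def by blast
  qed
qed

lemma pseudoforest_if_forest: "is_forest G \<Longrightarrow> pseudoforest G"
  unfolding is_forest_def acyclic_graph_def using pseudoforest_if_at_most_one_cycle by blast

lemma pseudoforest_acyclic_gadd:
  assumes wf: "wf_graph (gadd G e)" and ac: "acyclic_graph G"
  shows "pseudoforest (gadd G e)"
proof (rule pseudoforest_if_at_most_one_cycle[OF wf])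
  have "wf_graph G" using wf by (rule wf_graph_subgraph) auto
  then show "C1 = C2" if "is_cycle (gadd G e) C1" "is_cycle (gadd G e) C2" for C1 C2
    using cycle_unique_gadd[OF _ ac that] by blast
qed

section \<open>Disjoint unions\<close>

lemma gunion_commute: "gunion G H = gunion H G"
  by (simp add: gunion_def Un_commute)

lemma gunion_simps [simp]:
  "verts (gunion G H) = verts G \<union> verts H" "edges (gunion G H) = edges G \<union> edges H"
  by (simp_all add: gunion_def)

lemma wf_graph_gunion:
  assumes "wf_graph G" "wf_graph H"
  shows "wf_graph (gunion G H)"
  unfolding wf_graph_def
proof (intro conjI ballI)
  show "finite (verts (gunion G H))" using assms unfolding wf_graph_def by simp
  fix e assume e: "e \<in> edges (gunion G H)"
  obtain x y where "x \<noteq> y" "e = {x, y}"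
  proof (cases "e \<in> edges G")
    case True
    then show ?thesis using assms(1) that unfolding wf_graph_def by blast
  next
    case False
    then have "e \<in> edges H" using e by simp
    then show ?thesis using assms(2) that unfolding wf_graph_def by blast
  qed
  moreover have "e \<subseteq> verts (gunion G H)"
    using e wf_graph_edge_subset[OF assms(1)] wf_graph_edge_subset[OF assms(2)] by auto
  ultimately show "\<exists>x y. x \<noteq> y \<and> e = {x, y} \<and> x \<in> verts (gunion G H) \<and> y \<in> verts (gunion G H)"
    by blast
qed

context
  fixes G H :: "'a graph"
  assumes wf: "wf_graph G" "wf_graph H" and disj: "verts G \<inter> verts H = {}"
begin

lemma walk_in_gunion_disjoint:
  "walk_edges p \<subseteq> edges (gunion G H) \<Longrightarrow> set p \<inter> verts G \<noteq> {} \<Longrightarrow> set p \<subseteq> verts G"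
proof (induction p rule: walk_edges.induct)
  case (1 x y r)
  have e: "{x, y} \<in> edges G \<or> {x, y} \<in> edges H" using "1.prems"(1) by simp
  have side: "{x, y} \<in> edges G" if "x \<in> verts G \<or> y \<in> verts G"
    using e that disj wf_graph_edge_subset[OF wf(2), of "{x, y}"] by blast
  show ?case
  proof (cases "x \<in> verts G")
    case True
    then have "y \<in> verts G" using side wf_graph_edge_subset[OF wf(1)] by blast
    then show ?thesis using True "1.IH" "1.prems"(1) by auto
  next
    case False
    then have "set (y # r) \<subseteq> verts G" using "1.IH" "1.prems" by auto
    then have "x \<in> verts G" using side wf_graph_edge_subset[OF wf(1)] by auto
    then show ?thesis using \<open>set (y # r) \<subseteq> verts G\<close> by simp
  qed
qed auto

lemma rtranclp_adj_gunion_disjoint: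
  assumes "(adj (gunion G H))\<^sup>*\<^sup>* x y" "x \<in> verts G"
  shows "y \<in> verts G"
proof -
  obtain p where p: "p \<noteq> []" "hd p = x" "last p = y" "walk_edges p \<subseteq> edges (gunion G H)"
    using distinct_walk_if_rtranclp_adj[OF assms(1)] by blast
  have "x \<in> set p" "y \<in> set p" using p(1-3) hd_in_set last_in_set by blast+
  then have "set p \<subseteq> verts G" using walk_in_gunion_disjoint[OF p(4)] assms(2) by blast
  then show ?thesis using \<open>y \<in> set p\<close> by blast
qed

lemma is_cycle_gunion_disjoint_meets:
  assumes C: "is_cycle (gunion G H) C" and meets: "\<Union>C \<inter> verts G \<noteq> {}"
  shows "is_cycle G C"
proof -
  obtain vs where vs: "length vs \<ge> 3" "distinct vs" "C = cycle_edges vs" "C \<subseteq> edges (gunion G H)"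
    using C unfolding is_cycle_iff_cycle_edges by blast
  have walk: "walk_edges vs \<subseteq> edges (gunion G H)" using vs(3,4) by (auto simp: cycle_edges_def)
  have "vs \<noteq> []" using vs(1) by auto
  then have "\<Union>C \<subseteq> set vs" using vs(3) Union_cycle_edges_subset by blast
  then have sv: "set vs \<subseteq> verts G" using walk_in_gunion_disjoint[OF walk] meets by blast
  have "C \<subseteq> edges G"
  proof
    fix e assume e: "e \<in> C"
    then have "e \<subseteq> verts G" using \<open>\<Union>C \<subseteq> set vs\<close> sv by blast
    moreover have "e \<noteq> {}"
      using e vs(4) wf_graph_gunion[OF wf] unfolding wf_graph_def by blast
    moreover have "e \<in> edges G \<or> e \<in> edges H" using e vs(4) by auto
    ultimately show "e \<in> edges G" using wf_graph_edge_subset[OF wf(2)] disj by blast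
  qed
  then show ?thesis unfolding is_cycle_iff_cycle_edges using vs sv by blast
qed

end

lemma is_cycle_gunion_disjoint:
  assumes wf: "wf_graph G" "wf_graph H" and disj: "verts G \<inter> verts H = {}"
    and C: "is_cycle (gunion G H) C"
  shows "is_cycle G C \<or> is_cycle H C"
proof -
  obtain vs where vs: "length vs \<ge> 3" "set vs \<subseteq> verts G \<union> verts H" "C = cycle_edges vs"
    using C unfolding is_cycle_iff_cycle_edges by auto
  have "vs \<noteq> []" using vs(1) by auto
  then have "hd vs \<in> verts G \<union> verts H" using vs(2) hd_in_set by blast
  moreover have "hd vs \<in> \<Union>C" using vs(3) by (auto simp: cycle_edges_def)
  ultimately consider "\<Union>C \<inter> verts G \<noteq> {}" | "\<Union>C \<inter> verts H \<noteq> {}" by blast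
  then show ?thesis
  proof cases
    case 1
    then show ?thesis using is_cycle_gunion_disjoint_meets[OF wf disj C] by blast
  next
    case 2
    have "verts H \<inter> verts G = {}" using disj by blast
    moreover have "is_cycle (gunion H G) C" using C by (simp add: gunion_commute)
    ultimately show ?thesis using is_cycle_gunion_disjoint_meets[of H G C] wf 2 by blast
  qed
qed

lemma acyclic_graph_gunion_disjoint:
  assumes "wf_graph G" "wf_graph H" "verts G \<inter> verts H = {}" "acyclic_graph G" "acyclic_graph H"
  shows "acyclic_graph (gunion G H)"
  using assms is_cycle_gunion_disjoint unfolding acyclic_graph_def by blast

section \<open>2-switches\<close>

definition switch_base :: "'a graph \<Rightarrow> 'a \<Rightarrow> 'a \<Rightarrow> 'a \<Rightarrow> 'a \<Rightarrow> 'a graph" where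
  "switch_base G a b c d = (verts G, edges G - {{a, b}, {c, d}})"

lemma switch_base_simps [simp]:
  "verts (switch_base G a b c d) = verts G" "edges (switch_base G a b c d) = edges G - {{a, b}, {c, d}}"
  by (simp_all add: switch_base_def)

lemma two_switch_eq_gadd_switch_base:
  "interchangeable G a b c d \<Longrightarrow>
     two_switch G a b c d = gadd (gadd (switch_base G a b c d) {a, c}) {b, d}"
  by (simp add: two_switch_def switch_base_def gadd_def insert_commute)

lemma interchangeable_swap: "interchangeable G b a d c = interchangeable G a b c d"
  by (auto simp: interchangeable_def insert_commute)

lemma switch_base_swap: "switch_base G b a d c = switch_base G a b c d"
  by (simp add: switch_base_def insert_commute)

lemma two_switch_swap: "two_switch G b a d c = two_switch G a b c d"
  by (simp add: two_switch_def interchangeable_swap insert_commute)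

lemma wf_graph_two_switch:
  assumes wf: "wf_graph G" and i: "interchangeable G a b c d"
  shows "wf_graph (two_switch G a b c d)"
proof -
  have "{a, b} \<subseteq> verts G" "{c, d} \<subseteq> verts G"
    using i wf_graph_edge_subset[OF wf] unfolding interchangeable_def by auto
  moreover have "a \<noteq> c" "b \<noteq> d" using i unfolding interchangeable_def by auto
  moreover have "wf_graph (switch_base G a b c d)" using wf by (rule wf_graph_subgraph) auto
  ultimately show ?thesis
    unfolding two_switch_eq_gadd_switch_base[OF i] by (simp add: wf_graph_gadd)
qed

lemma interchangeable_gadd:
  "interchangeable (gadd G e) a b c d \<Longrightarrow> e \<noteq> {a, b} \<Longrightarrow> e \<noteq> {c, d} \<Longrightarrow>
     interchangeable G a b c d"
  by (simp add: interchangeable_def)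

lemma two_switch_gadd:
  assumes "interchangeable (gadd G e) a b c d" "e \<noteq> {a, b}" "e \<noteq> {c, d}"
  shows "two_switch (gadd G e) a b c d = gadd (two_switch G a b c d) e"
  using assms interchangeable_gadd[OF assms]
  by (auto simp: two_switch_def gadd_def)

lemma acyclic_two_switch_if_unreachable:
  assumes wf: "wf_graph G" and ac: "acyclic_graph G" and i: "interchangeable G a b c d"
    and nac: "\<not> (adj G)\<^sup>*\<^sup>* a c"
  shows "acyclic_graph (two_switch G a b c d)"
proof -
  let ?B = "switch_base G a b c d"
  have ab: "{a, b} \<in> edges G" and cd: "{c, d} \<in> edges G"
    using i unfolding interchangeable_def by auto
  have B_sub: "edges ?B \<subseteq> edges G" "edges ?B \<subseteq> edges (gdel G {a, b})" by auto
  have acB: "acyclic_graph ?B" using ac by (rule acyclic_graph_mono) auto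
  have "\<not> (adj ?B)\<^sup>*\<^sup>* a c" using nac rtranclp_adj_mono[OF B_sub(1), of a c] by blast
  then have ac1: "acyclic_graph (gadd ?B {a, c})" using acB by (rule acyclic_gadd[rotated])
  have nbc: "\<not> (adj G)\<^sup>*\<^sup>* b c"
  proof
    assume "(adj G)\<^sup>*\<^sup>* b c"
    moreover have "adj G a b" using ab by (simp add: adj_def)
    ultimately have "(adj G)\<^sup>*\<^sup>* a c" by (rule converse_rtranclp_into_rtranclp[rotated])
    then show False using nac by blast
  qed
  have "\<not> (adj (gadd ?B {a, c}))\<^sup>*\<^sup>* b d"
  proof
    assume "(adj (gadd ?B {a, c}))\<^sup>*\<^sup>* b d"
    then consider "(adj ?B)\<^sup>*\<^sup>* b d" | "(adj ?B)\<^sup>*\<^sup>* b a" | "(adj ?B)\<^sup>*\<^sup>* b c"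
      using rtranclp_adj_gadd_cases[of ?B a c b d] by blast
    then show False
    proof cases
      case 1
      then have "(adj G)\<^sup>*\<^sup>* b d" by (rule rtranclp_adj_mono[OF B_sub(1)])
      moreover have "adj G d c" using cd by (simp add: adj_def insert_commute)
      ultimately have "(adj G)\<^sup>*\<^sup>* b c" by (rule rtranclp.rtrancl_into_rtrancl)
      then show False using nbc by blast
    next
      case 2
      then have "(adj (gdel G {a, b}))\<^sup>*\<^sup>* b a" by (rule rtranclp_adj_mono[OF B_sub(2)])
      then have "(adj (gdel G {a, b}))\<^sup>*\<^sup>* a b" by (rule rtranclp_adj_sym)
      then show False using bridge_if_acyclic[OF wf ac ab] by blast
    next
      case 3
      then have "(adj G)\<^sup>*\<^sup>* b c" by (rule rtranclp_adj_mono[OF B_sub(1)])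
      then show False using nbc by blast
    qed
  qed
  then show ?thesis
    unfolding two_switch_eq_gadd_switch_base[OF i] using ac1 by (rule acyclic_gadd[rotated])
qed

section \<open>p-switches over a forest\<close>

lemma switch_base_reach_exclusive:
  assumes wf: "wf_graph G" and ac: "acyclic_graph G" and i: "interchangeable G a b c d"
    and ac_reach: "(adj (switch_base G a b c d))\<^sup>*\<^sup>* a c"
  shows "\<not> (adj (switch_base G a b c d))\<^sup>*\<^sup>* b d"
proof
  assume bd_reach: "(adj (switch_base G a b c d))\<^sup>*\<^sup>* b d"
  let ?D = "gdel G {a, b}"
  have ab: "{a, b} \<in> edges G" and cd: "{c, d} \<in> edges G" and "{c, d} \<noteq> {a, b}"
    using i unfolding interchangeable_def by auto
  have B_sub: "edges (switch_base G a b c d) \<subseteq> edges ?D" by auto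
  have "(adj ?D)\<^sup>*\<^sup>* a c" by (rule rtranclp_adj_mono[OF B_sub ac_reach])
  moreover have "adj ?D c d" using cd \<open>{c, d} \<noteq> {a, b}\<close> by (simp add: adj_def)
  ultimately have "(adj ?D)\<^sup>*\<^sup>* a d" by (rule rtranclp.rtrancl_into_rtrancl)
  moreover have "(adj ?D)\<^sup>*\<^sup>* d b" by (rule rtranclp_adj_sym[OF rtranclp_adj_mono[OF B_sub bd_reach]])
  ultimately have "(adj ?D)\<^sup>*\<^sup>* a b" by (rule rtranclp_trans)
  then show False using bridge_if_acyclic[OF wf ac ab] by blast
qed

lemma pseudoforest_two_switch_if_base_unreachable:
  assumes wf: "wf_graph G" and ac: "acyclic_graph G" and i: "interchangeable G a b c d"
    and nac: "\<not> (adj (switch_base G a b c d))\<^sup>*\<^sup>* a c"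
  shows "pseudoforest (two_switch G a b c d)"
proof -
  have "acyclic_graph (switch_base G a b c d)" using ac by (rule acyclic_graph_mono) auto
  then have "acyclic_graph (gadd (switch_base G a b c d) {a, c})" using nac by (rule acyclic_gadd)
  moreover have "wf_graph (gadd (gadd (switch_base G a b c d) {a, c}) {b, d})"
    using wf_graph_two_switch[OF wf i] unfolding two_switch_eq_gadd_switch_base[OF i] .
  ultimately show ?thesis
    unfolding two_switch_eq_gadd_switch_base[OF i] by (rule pseudoforest_acyclic_gadd[rotated])
qed

lemma p_switch_forest:
  assumes F: "is_forest F" and i: "interchangeable F a b c d"
  shows "p_switch F a b c d"
proof -
  have wf: "wf_graph F" and ac: "acyclic_graph F" using F unfolding is_forest_def by auto
  have "pseudoforest (two_switch F a b c d)"
  proof (cases "(adj (switch_base F a b c d))\<^sup>*\<^sup>* a c")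
    case True
    have i': "interchangeable F b a d c" using i by (simp only: interchangeable_swap)
    have "\<not> (adj (switch_base F b a d c))\<^sup>*\<^sup>* b d"
      using switch_base_reach_exclusive[OF wf ac i True] switch_base_swap[of F a b c d] by simp
    then have "pseudoforest (two_switch F b a d c)"
      by (rule pseudoforest_two_switch_if_base_unreachable[OF wf ac i'])
    then show ?thesis by (simp only: two_switch_swap)
  next
    case False
    then show ?thesis by (rule pseudoforest_two_switch_if_base_unreachable[OF wf ac i])
  qed
  then show ?thesis using pseudoforest_if_forest[OF F] i unfolding p_switch_def by blast
qed

section \<open>p-switches across a forest and a unicyclic graph\<close>

lemma acyclic_graph_gdel_cycle_edge:
  assumes U: "unicyclic U" and Z: "is_cycle U Z" and f: "f \<in> Z"
  shows "acyclic_graph (gdel U f)"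
  unfolding acyclic_graph_def
proof
  assume "\<exists>C. is_cycle (gdel U f) C"
  then obtain C where C: "is_cycle (gdel U f) C" by blast
  have "C \<subseteq> edges U" using is_cycle_subset_edges[OF C] by auto
  then have "is_cycle U C" using is_cycle_mono[OF C] by simp
  then have "C = Z" using U Z unfolding unicyclic_def by blast
  then have "f \<in> edges (gdel U f)" using f is_cycle_subset_edges[OF C] by blast
  then show False by simp
qed

lemma Forest_edge_notin_cycle:
  assumes "is_cycle U Z" "e \<in> edges (Forest U)"
  shows "e \<notin> Z"
proof
  assume "e \<in> Z"
  then have "e \<subseteq> cycle_verts U" using assms(1) unfolding cycle_verts_def by blast
  then have "e \<in> edges (Cycles U)"
    using \<open>e \<in> Z\<close> is_cycle_subset_edges[OF assms(1)] unfolding Cycles_def induced_def by auto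
  then show False using assms(2) unfolding Forest_def by simp
qed

lemma unicyclic_obtain_cycle_edge:
  assumes U: "unicyclic U"
  obtains f where "f \<in> edges U" "f \<notin> edges (Forest U)" "acyclic_graph (gdel U f)"
proof -
  obtain Z where Z: "is_cycle U Z" using U unfolding unicyclic_def by blast
  then have "Z \<noteq> {}" unfolding is_cycle_iff_cycle_edges cycle_edges_def by auto
  then obtain f where f: "f \<in> Z" by blast
  have "f \<in> edges U" using f is_cycle_subset_edges[OF Z] by blast
  moreover have "f \<notin> edges (Forest U)" using Forest_edge_notin_cycle[OF Z] f by blast
  ultimately show ?thesis using that acyclic_graph_gdel_cycle_edge[OF U Z f] by blast
qed

lemma interchangeable_gunion_disjoint:
  assumes wf: "wf_graph G" "wf_graph H" and disj: "verts G \<inter> verts H = {}"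
    and ab: "{a, b} \<in> edges G" and cd: "{c, d} \<in> edges H"
  shows "interchangeable (gunion G H) a b c d"
proof -
  have abG: "{a, b} \<subseteq> verts G" and cdH: "{c, d} \<subseteq> verts H"
    using wf_graph_edge_subset[OF wf(1) ab] wf_graph_edge_subset[OF wf(2) cd] .
  have side: "e \<subseteq> verts G \<or> e \<subseteq> verts H" if "e \<in> edges (gunion G H)" for e
    using that wf_graph_edge_subset[OF wf(1)] wf_graph_edge_subset[OF wf(2)] by auto
  have "{a, c} \<notin> edges (gunion G H)" "{b, d} \<notin> edges (gunion G H)"
    using side abG cdH disj by blast+
  moreover have "{a, b} \<inter> {c, d} = {}" using abG cdH disj by blast
  ultimately show ?thesis using ab cd unfolding interchangeable_def by simp
qed

lemma p_switch_forest_unicyclic: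
  assumes F: "is_forest F" and U: "unicyclic U" and disj: "verts F \<inter> verts U = {}"
    and ab: "{a, b} \<in> edges F" and cd: "{c, d} \<in> edges (Forest U)"
  shows "p_switch (gunion F U) a b c d"
proof -
  have wfF: "wf_graph F" and acF: "acyclic_graph F" and wfU: "wf_graph U"
    using F U unfolding is_forest_def unicyclic_def by auto
  obtain f where fU: "f \<in> edges U" and f_cycle: "f \<notin> edges (Forest U)"
    and acU': "acyclic_graph (gdel U f)"
    using unicyclic_obtain_cycle_edge[OF U] by blast
  have cdU: "{c, d} \<in> edges U" using cd unfolding Forest_def by simp
  define G' where "G' = gunion F (gdel U f)"
  have wfU': "wf_graph (gdel U f)" using wfU by (rule wf_graph_subgraph) auto
  have wfG: "wf_graph (gunion F U)" using wf_graph_gunion[OF wfF wfU] .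
  have G: "gunion F U = gadd G' f" using fU by (auto simp: G'_def gunion_def gadd_def)
  have acG': "acyclic_graph G'" unfolding G'_def
    using acyclic_graph_gunion_disjoint[OF wfF wfU'] disj acF acU'
    by simp
  have aF: "a \<in> verts F" and cU: "c \<in> verts U"
    using wf_graph_edge_subset[OF wfF ab] wf_graph_edge_subset[OF wfU cdU] by auto
  have i: "interchangeable (gunion F U) a b c d"
    using interchangeable_gunion_disjoint[OF wfF wfU disj ab cdU] .
  have fab: "f \<noteq> {a, b}" using fU aF disj wf_graph_edge_subset[OF wfU] by blast
  have fcd: "f \<noteq> {c, d}" using cd f_cycle by blast
  have i': "interchangeable G' a b c d" using i fab fcd unfolding G by (rule interchangeable_gadd)
  have "\<not> (adj G')\<^sup>*\<^sup>* a c"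
    using rtranclp_adj_gunion_disjoint[OF wfF wfU'] disj aF cU unfolding G'_def by auto
  then have "acyclic_graph (two_switch G' a b c d)"
    using acyclic_two_switch_if_unreachable[OF _ acG' i'] wf_graph_gunion[OF wfF wfU'] G'_def
    by blast
  moreover have "two_switch (gunion F U) a b c d = gadd (two_switch G' a b c d) f"
    using i fab fcd unfolding G by (rule two_switch_gadd)
  moreover have "wf_graph (two_switch (gunion F U) a b c d)" using wf_graph_two_switch[OF wfG i] .
  ultimately have "pseudoforest (two_switch (gunion F U) a b c d)"
    by (metis pseudoforest_acyclic_gadd)
  moreover have "pseudoforest (gunion F U)" using pseudoforest_acyclic_gadd wfG acG' G by metis
  ultimately show ?thesis using i unfolding p_switch_def by blast
qed

theorem lemma4p3:
  fixes F U :: "'a graph"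
  assumes "is_forest F" and "unicyclic U" and "verts F \<inter> verts U = {}"
  shows "(\<forall>a b c d. interchangeable F a b c d \<longrightarrow> p_switch F a b c d) \<and>
         (\<forall>a b c d. {a, b} \<in> edges F \<and> {c, d} \<in> edges (Forest U) \<longrightarrow>
            p_switch (gunion F U) a b c d)"
  using p_switch_forest[OF assms(1)] p_switch_forest_unicyclic[OF assms] by blast

end
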